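(* Let $\underline{X}=(X_n,p_n)$ be an inverse sequence of sets and $(T_{\underline{X}},v)$ its tree. If $\underline{X}$ is Mittag-Leffler, then for each $n_0$ there is $n_1>n_0$ such that for every $\alpha\in X_{n_0}$ extendable to $n_1$, the arc in $T_{\underline{X}}$ from the root $v$ to the vertex $\alpha$ is geodesically complete, i.e. it is contained in the image of an isometric embedding $F:[0,\infty)\to T_{\underline{X}}$ with $F(0)=v$.
   Context: An inverse sequence of sets $(X_n,p_n)_{n\ge1}$ has maps $p_n:X_{n+1}\to X_n$; $p_{nm}=p_n\circ\cdots\circ p_{m-1}:X_m\to X_n$. Its tree $T_{\underline{X}}$ is the geometric realization of the graph with vertices $\{v\}\sqcup\bigsqcup_nX_n$ and edges $\{x,p_n(x)\}$ ($x\in X_{n+1}$) and $\{x,v\}$ ($x\in X_1$), edges of length 1, path metric, rooted at $v$. $\underline{X}$ is Mittag-Leffler (ML) if for every $n_0$ there is $n_1>n_0$ such that for all $n>n_1$, $p_{n_0n}(X_n)=p_{n_0n_1}(X_{n_1})$. An element $\alpha\in X_{n_0}$ is extendable to $n_1$ if there is $\beta\in X_{n_1}$ with $p_{n_0n_1}(\beta)=\alpha$. *)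

theory Defs
  imports Complex_Main
begin

definition inv_seq :: "(nat \<Rightarrow> 'a set) \<Rightarrow> (nat \<Rightarrow> 'a \<Rightarrow> 'a) \<Rightarrow> bool" where
  "inv_seq X p \<longleftrightarrow> (\<forall>n\<ge>1. \<forall>x\<in>X (Suc n). p n x \<in> X n)"

text \<open>pk p n k = p_{n,n+k} = p_n \<circ> ... \<circ> p_{n+k-1}\<close>
primrec pk :: "(nat \<Rightarrow> 'a \<Rightarrow> 'a) \<Rightarrow> nat \<Rightarrow> nat \<Rightarrow> 'a \<Rightarrow> 'a" where
  "pk p n 0 x = x"
| "pk p n (Suc k) x = pk p n k (p (n + k) x)"

definition pnm :: "(nat \<Rightarrow> 'a \<Rightarrow> 'a) \<Rightarrow> nat \<Rightarrow> nat \<Rightarrow> 'a \<Rightarrow> 'a" where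
  "pnm p n m = pk p n (m - n)"

definition mittag_leffler :: "(nat \<Rightarrow> 'a set) \<Rightarrow> (nat \<Rightarrow> 'a \<Rightarrow> 'a) \<Rightarrow> bool" where
  "mittag_leffler X p \<longleftrightarrow>
     (\<forall>n0\<ge>1. \<exists>n1>n0. \<forall>n>n1. pnm p n0 n ` X n = pnm p n0 n1 ` X n1)"

definition extendable :: "(nat \<Rightarrow> 'a set) \<Rightarrow> (nat \<Rightarrow> 'a \<Rightarrow> 'a) \<Rightarrow> nat \<Rightarrow> 'a \<Rightarrow> nat \<Rightarrow> bool" where
  "extendable X p n0 \<alpha> n1 \<longleftrightarrow> (\<exists>\<beta>\<in>X n1. pnm p n0 n1 \<beta> = \<alpha>)"

text \<open>Points of the geometric realisation T_X of the tree.
  None is the root v.  Some (n, x, t) with n \<ge> 1, x \<in> X n, 0 < t \<le> 1 is the point on the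
  edge joining x to its parent (p_{n-1}(x), resp. v if n = 1) at distance t from the parent;
  t = 1 gives the vertex x itself.  Every point of T_X has exactly one such representation.\<close>
type_synonym 'a tpt = "(nat \<times> 'a \<times> real) option"

definition tree_pts :: "(nat \<Rightarrow> 'a set) \<Rightarrow> 'a tpt set" where
  "tree_pts X = {None} \<union> {Some (n, x, t) | n x t. 1 \<le> n \<and> x \<in> X n \<and> 0 < t \<and> t \<le> 1}"

fun theight :: "'a tpt \<Rightarrow> real" where
  "theight None = 0"
| "theight (Some (n, x, t)) = real n - 1 + t"

text \<open>Height of the meet (last common point of the root-arcs) of two points.\<close>
fun tmeet :: "(nat \<Rightarrow> 'a \<Rightarrow> 'a) \<Rightarrow> 'a tpt \<Rightarrow> 'a tpt \<Rightarrow> real" where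
  "tmeet p None Q = 0"
| "tmeet p P None = 0"
| "tmeet p (Some (n, x, t)) (Some (m, y, s)) =
     (let C = {k. 1 \<le> k \<and> k \<le> min n m \<and> pnm p k n x = pnm p k m y} in
      if C = {} then 0
      else let K = Max C in
        if K < n \<and> K < m then real K
        else if n = m then real n - 1 + min t s
        else if K = n then real n - 1 + t
        else real m - 1 + s)"

definition tdist :: "(nat \<Rightarrow> 'a \<Rightarrow> 'a) \<Rightarrow> 'a tpt \<Rightarrow> 'a tpt \<Rightarrow> real" where
  "tdist p P Q = theight P + theight Q - 2 * tmeet p P Q"

definition root_arc :: "(nat \<Rightarrow> 'a \<Rightarrow> 'a) \<Rightarrow> nat \<Rightarrow> 'a \<Rightarrow> 'a tpt set" where
  "root_arc p n0 \<alpha> = {None} \<union>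
     {Some (m, pnm p m n0 \<alpha>, s) | m s. 1 \<le> m \<and> m \<le> n0 \<and> 0 < s \<and> s \<le> 1}"

definition isometric_ray :: "(nat \<Rightarrow> 'a set) \<Rightarrow> (nat \<Rightarrow> 'a \<Rightarrow> 'a) \<Rightarrow> (real \<Rightarrow> 'a tpt) \<Rightarrow> bool" where
  "isometric_ray X p F \<longleftrightarrow>
     (\<forall>s\<ge>0. F s \<in> tree_pts X) \<and>
     (\<forall>s\<ge>0. \<forall>r\<ge>0. tdist p (F s) (F r) = \<bar>s - r\<bar>)"

end

theory Submission
  imports Defs
begin

text \<open>Under the Mittag-Leffler condition the stable images
  \<open>Y n = p_{n,N n}(X (N n))\<close> form an inverse sequence with surjective bonding maps, so by
  dependent choice every \<open>\<alpha> \<in> Y n0\<close> lies on a compatible sequence \<open>(x n)\<close> with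
  \<open>x n0 = \<alpha>\<close>. Running along the vertices \<open>x 1, x 2, \<dots>\<close> is a geodesic ray from the root:
  any two of its points have their meet at the lower one, so their distance is the difference
  of their heights. Its initial segment of length \<open>n0\<close> is the arc from the root to \<open>\<alpha>\<close>.\<close>

lemma pk_Suc_left: "pk p n (Suc k) x = p n (pk p (Suc n) k x)"
  by (induction k arbitrary: x) simp_all

lemma pk_in_X:
  assumes "inv_seq X p" "1 \<le> n" "x \<in> X (n + k)"
  shows "pk p n k x \<in> X n"
  using assms(2,3)
proof (induction k arbitrary: n)
  case (Suc k)
  then have "pk p (Suc n) k x \<in> X (Suc n)" by simp
  then have "p n (pk p (Suc n) k x) \<in> X n"
    using assms(1) Suc.prems(1) by (auto simp: inv_seq_def)
  then show ?case
    by (simp only: pk_Suc_left)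
qed simp

lemma pnm_in_X: "inv_seq X p \<Longrightarrow> 1 \<le> n \<Longrightarrow> n \<le> m \<Longrightarrow> x \<in> X m \<Longrightarrow> pnm p n m x \<in> X n"
  unfolding pnm_def using pk_in_X[of X p n x "m - n"] by simp

lemma pnm_refl [simp]: "pnm p n n x = x"
  by (simp add: pnm_def)

lemma pnm_Suc_left: "n < m \<Longrightarrow> pnm p n m x = p n (pnm p (Suc n) m x)"
  unfolding pnm_def by (metis Suc_diff_Suc pk_Suc_left)

definition compatible_seq :: "(nat \<Rightarrow> 'a \<Rightarrow> 'a) \<Rightarrow> (nat \<Rightarrow> 'a) \<Rightarrow> bool" where
  "compatible_seq p x \<longleftrightarrow> (\<forall>n\<ge>1. p n (x (Suc n)) = x n)"

lemma compatible_seq_pnm: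
  assumes "compatible_seq p x" "1 \<le> k" "k \<le> n"
  shows "pnm p k n (x n) = x k"
proof -
  have "pk p k d (x (k + d)) = x k" for d
    using assms(1,2) by (induction d) (simp_all add: compatible_seq_def)
  then show ?thesis
    using assms(3) by (metis pnm_def le_add_diff_inverse)
qed

lemma tmeet_compatible_seq:
  assumes "compatible_seq p x" "1 \<le> n" "1 \<le> m"
  shows "tmeet p (Some (n, x n, t)) (Some (m, x m, u)) =
    (if n < m then real n - 1 + t else if n = m then real n - 1 + min t u else real m - 1 + u)"
proof -
  have C: "{k. 1 \<le> k \<and> k \<le> min n m \<and> pnm p k n (x n) = pnm p k m (x m)} = {1..min n m}"
    using compatible_seq_pnm[OF assms(1)] by auto
  have "{1..min n m} \<noteq> {}" and "Max {1..min n m} = min n m"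
    using assms(2,3) by (auto simp: Max_eq_iff)
  then show ?thesis
    by (simp only: tmeet.simps Let_def C if_False) (auto simp: min_def)
qed

text \<open>The unit speed path through the vertices \<open>x 1, x 2, \<dots>\<close>: time \<open>s \<in> (n - 1, n]\<close> is
  spent on the edge below \<open>x n\<close>.\<close>
definition seq_ray :: "(nat \<Rightarrow> 'a) \<Rightarrow> real \<Rightarrow> 'a tpt" where
  "seq_ray x s = (if s \<le> 0 then None else
      Some (nat \<lceil>s\<rceil>, x (nat \<lceil>s\<rceil>), s - real (nat \<lceil>s\<rceil>) + 1))"

lemma seq_ray_0 [simp]: "seq_ray x 0 = None"
  by (simp add: seq_ray_def)

lemma nat_ceiling_bounds:
  assumes "(s::real) > 0"
  shows "1 \<le> nat \<lceil>s\<rceil>" "real (nat \<lceil>s\<rceil>) - 1 < s" "s \<le> real (nat \<lceil>s\<rceil>)"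
  using assms by linarith+

lemma seq_ray_vertex_edge:
  assumes "1 \<le> m" "0 < s" "s \<le> 1"
  shows "seq_ray x (real m - 1 + s) = Some (m, x m, s)"
proof -
  have "\<lceil>real m - 1 + s\<rceil> = int m"
    by (rule ceiling_unique) (use assms in auto)
  then show ?thesis
    using assms unfolding seq_ray_def by auto
qed

lemma theight_seq_ray: "s \<ge> 0 \<Longrightarrow> theight (seq_ray x s) = s"
  unfolding seq_ray_def by auto

lemma tmeet_seq_ray:
  assumes "compatible_seq p x" "s \<ge> 0" "r \<ge> 0"
  shows "tmeet p (seq_ray x s) (seq_ray x r) = min s r"
proof (cases "s \<le> 0 \<or> r \<le> 0")
  case True
  then have "seq_ray x s = None \<or> seq_ray x r = None"
    by (auto simp: seq_ray_def)
  moreover have "tmeet p P None = 0" for P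
    by (cases P) auto
  ultimately show ?thesis
    using True assms(2,3) by auto
next
  case False
  define n m where "n = nat \<lceil>s\<rceil>" and "m = nat \<lceil>r\<rceil>"
  have s: "1 \<le> n" "real n - 1 < s" "s \<le> real n" and r: "1 \<le> m" "real m - 1 < r" "r \<le> real m"
    using nat_ceiling_bounds[of s] nat_ceiling_bounds[of r] False by (auto simp: n_def m_def)
  have "seq_ray x s = Some (n, x n, s - real n + 1)" "seq_ray x r = Some (m, x m, r - real m + 1)"
    using False by (simp_all add: seq_ray_def n_def m_def)
  then have "tmeet p (seq_ray x s) (seq_ray x r) =
      (if n < m then s else if n = m then real n - 1 + min (s - real n + 1) (r - real m + 1) else r)"
    using tmeet_compatible_seq[OF assms(1) s(1) r(1)] by simp
  moreover have "n < m \<Longrightarrow> s \<le> r" "m < n \<Longrightarrow> r \<le> s"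
    using s r by (simp_all add: nat_less_real_le)
  ultimately show ?thesis
    by (auto simp: min_def)
qed

lemma isometric_seq_ray:
  assumes "compatible_seq p x" "\<forall>n\<ge>1. x n \<in> X n"
  shows "isometric_ray X p (seq_ray x)"
  unfolding isometric_ray_def
proof (intro conjI allI impI)
  fix s :: real assume "s \<ge> 0"
  then show "seq_ray x s \<in> tree_pts X"
    using nat_ceiling_bounds[of s] assms(2) by (auto simp: seq_ray_def tree_pts_def)
next
  fix s r :: real assume "s \<ge> 0" "r \<ge> 0"
  then show "tdist p (seq_ray x s) (seq_ray x r) = \<bar>s - r\<bar>"
    by (simp add: tdist_def theight_seq_ray tmeet_seq_ray[OF assms(1)] min_def)
qed

lemma root_arc_subset_seq_ray:
  assumes "compatible_seq p x" "x n0 = \<alpha>"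
  shows "root_arc p n0 \<alpha> \<subseteq> seq_ray x ` {0..}"
proof
  fix P assume "P \<in> root_arc p n0 \<alpha>"
  then consider "P = None"
    | m s where "P = Some (m, pnm p m n0 \<alpha>, s)" "1 \<le> m" "m \<le> n0" "0 < s" "s \<le> 1"
    unfolding root_arc_def by auto
  then show "P \<in> seq_ray x ` {0..}"
  proof cases
    case 1
    then show ?thesis
      using seq_ray_0 by (metis atLeast_iff image_eqI order_refl)
  next
    case 2
    then have "P = seq_ray x (real m - 1 + s)"
      using assms compatible_seq_pnm seq_ray_vertex_edge by metis
    moreover have "real m - 1 + s \<in> {0..}"
      using 2 by simp
    ultimately show ?thesis
      by blast
  qed
qed

lemma compatible_seq_through:
  assumes "inv_seq X p" "1 \<le> n0" "\<alpha> \<in> Y n0" "\<forall>n\<ge>1. Y n \<subseteq> X n"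
    and lift: "\<forall>n\<ge>1. \<forall>y\<in>Y n. \<exists>z\<in>Y (Suc n). p n z = y"
  obtains x where "compatible_seq p x" "\<forall>n\<ge>1. x n \<in> X n" "x n0 = \<alpha>"
proof -
  obtain f where f: "\<And>n y. 1 \<le> n \<Longrightarrow> y \<in> Y n \<Longrightarrow> f n y \<in> Y (Suc n) \<and> p n (f n y) = y"
    using lift by metis
  define g where "g = rec_nat \<alpha> (\<lambda>k. f (n0 + k))"
  have gY: "g k \<in> Y (n0 + k)" for k
    by (induction k) (use assms(2,3) f in \<open>simp_all add: g_def\<close>)
  have g_step: "p (n0 + k) (g (Suc k)) = g k" for k
    using f[OF _ gY[of k]] assms(2) by (simp add: g_def)
  define x where "x n = (if n0 \<le> n then g (n - n0) else pnm p n n0 \<alpha>)" for n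
  have x_below: "x n = pnm p n n0 \<alpha>" if "n \<le> n0" for n
    using that by (cases "n = n0") (auto simp: x_def g_def)
  have "compatible_seq p x"
    unfolding compatible_seq_def
  proof (intro allI impI)
    fix n :: nat assume "1 \<le> n"
    show "p n (x (Suc n)) = x n"
    proof (cases "n0 \<le> n")
      case True
      then show ?thesis
        using g_step[of "n - n0"] by (simp add: x_def Suc_diff_le)
    next
      case False
      then show ?thesis
        using x_below[of n] x_below[of "Suc n"] pnm_Suc_left[of n n0 p \<alpha>] by simp
    qed
  qed
  moreover have "x n \<in> X n" if "1 \<le> n" for n
  proof (cases "n0 \<le> n")
    case True
    then show ?thesis
      using gY[of "n - n0"] assms(4) that by (auto simp: x_def)
  next
    case False
    have "\<alpha> \<in> X n0"
      using assms(2-4) by blast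
    then show ?thesis
      using False x_below[of n] pnm_in_X[OF assms(1) that, of n0 \<alpha>] by simp
  qed
  moreover have "x n0 = \<alpha>"
    by (simp add: x_below)
  ultimately show ?thesis
    using that by blast
qed

lemma mittag_leffler_stabilisation:
  assumes "mittag_leffler X p"
  obtains N where "\<And>n. 1 \<le> n \<Longrightarrow> n < N n"
    and "\<And>n m. 1 \<le> n \<Longrightarrow> N n \<le> m \<Longrightarrow> pnm p n m ` X m = pnm p n (N n) ` X (N n)"
proof -
  have "\<forall>n. \<exists>n1. 1 \<le> n \<longrightarrow> n < n1 \<and> (\<forall>m\<ge>n1. pnm p n m ` X m = pnm p n n1 ` X n1)"
    using assms by (metis mittag_leffler_def le_neq_implies_less order.refl)
  then show ?thesis
    using that by metis
qed

lemma stable_image_lift: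
  assumes stable: "\<And>n m. 1 \<le> n \<Longrightarrow> N n \<le> m \<Longrightarrow> pnm p n m ` X m = pnm p n (N n) ` X (N n)"
    and "\<And>n. 1 \<le> n \<Longrightarrow> n < N n" "1 \<le> n" "y \<in> pnm p n (N n) ` X (N n)"
  shows "\<exists>z\<in>pnm p (Suc n) (N (Suc n)) ` X (N (Suc n)). p n z = y"
proof -
  define m where "m = max (N n) (N (Suc n))"
  obtain w where w: "w \<in> X m" "y = pnm p n m w"
    using stable[OF assms(3), of m] assms(4) by (auto simp: m_def)
  have "n < m"
    using assms(2,3) by (fastforce simp: m_def less_max_iff_disj)
  have "pnm p (Suc n) m w \<in> pnm p (Suc n) (N (Suc n)) ` X (N (Suc n))"
    using stable[of "Suc n" m] w(1) by (auto simp: m_def)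
  moreover have "p n (pnm p (Suc n) m w) = y"
    using pnm_Suc_left[OF \<open>n < m\<close>, of p w] w(2) by argo
  ultimately show ?thesis
    by blast
qed

theorem proposition7p7:
  fixes X :: "nat \<Rightarrow> 'a set" and p :: "nat \<Rightarrow> 'a \<Rightarrow> 'a"
  assumes "inv_seq X p"
    and "mittag_leffler X p"
  shows "\<forall>n0\<ge>1. \<exists>n1>n0. \<forall>\<alpha>\<in>X n0. extendable X p n0 \<alpha> n1 \<longrightarrow>
           (\<exists>F. isometric_ray X p F \<and> F 0 = None \<and> root_arc p n0 \<alpha> \<subseteq> F ` {0..})"
proof (intro allI impI)
  fix n0 :: nat assume "1 \<le> n0"
  obtain N where N: "\<And>n. 1 \<le> n \<Longrightarrow> n < N n"
    and stable: "\<And>n m. 1 \<le> n \<Longrightarrow> N n \<le> m \<Longrightarrow> pnm p n m ` X m = pnm p n (N n) ` X (N n)"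
    using mittag_leffler_stabilisation[OF assms(2)] by blast
  define Y where "Y n = pnm p n (N n) ` X (N n)" for n
  have "\<forall>n\<ge>1. Y n \<subseteq> X n"
    using N pnm_in_X[OF assms(1)] by (fastforce simp: Y_def less_imp_le)
  moreover have "\<forall>n\<ge>1. \<forall>y\<in>Y n. \<exists>z\<in>Y (Suc n). p n z = y"
    using stable_image_lift[OF stable N] by (simp add: Y_def)
  moreover have "\<alpha> \<in> Y n0" if "extendable X p n0 \<alpha> (N n0)" for \<alpha>
    using that by (auto simp: extendable_def Y_def)
  ultimately have "\<exists>F. isometric_ray X p F \<and> F 0 = None \<and> root_arc p n0 \<alpha> \<subseteq> F ` {0..}"
    if "extendable X p n0 \<alpha> (N n0)" for \<alpha>
    using compatible_seq_through[OF assms(1) \<open>1 \<le> n0\<close>] that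
    by (metis isometric_seq_ray root_arc_subset_seq_ray seq_ray_0)
  then show "\<exists>n1>n0. \<forall>\<alpha>\<in>X n0. extendable X p n0 \<alpha> n1 \<longrightarrow>
           (\<exists>F. isometric_ray X p F \<and> F 0 = None \<and> root_arc p n0 \<alpha> \<subseteq> F ` {0..})"
    using N[OF \<open>1 \<le> n0\<close>] by blast
qed

end
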